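(* Let $\mathcal H$ be an HDML model, $\varphi$ a formula, and $Q_n^f$ the filtration classes defined below. Then for every $n\in\mathbb N$, $Q_n^f$ is finite and $|Q_n^f|\le 2^{|\varphi|\cdot N_n}$, where $N_n=n!\cdot\sum_{k=0}^{n}\frac{2^k}{(n-k)!}$.
   Context: A cubical set consists of pairwise disjoint sets $Q_n$ ($n\in\mathbb N$), $Q=\bigcup_n Q_n$, and for $n\ge1$, $1\le i\le n$, maps $s_i,t_i:Q_n\to Q_{n-1}$ satisfying $\alpha_i\circ\beta_j=\beta_{j-1}\circ\alpha_i$ for $1\le i<j\le n$, $\alpha,\beta\in\{s,t\}$. An HDML model is $\mathcal H=(Q,\bar s,\bar t,l,V)$ with $l:Q_1\to\Sigma$ satisfying $l(s_i(q))=l(t_i(q))$ for $q\in Q_2$, $i\in\{1,2\}$, and valuation $V:Q\to 2^{AP}$. HDML formulas: $\varphi::=p\mid\bot\mid\varphi\to\varphi\mid\langle\mathsf s\rangle\varphi\mid\langle\mathsf t\rangle\varphi$. Satisfaction at $q\in Q_n$: $p$ iff $p\in V(q)$; $\bot$ never; $\to$ classical; $\langle\mathsf s\rangle\psi$ iff some $q'\in Q_{n+1}$ and $1\le i\le n+1$ have $s_i(q')=q$ and $q'\models\psi$; $\langle\mathsf t\rangle\psi$ iff some $1\le i\le n$ has $t_i(q)\models\psi$. $|\varphi|$ is the number of occurrences of $\to$, modalities, atomic propositions and $\bot$ in $\varphi$; $\mathcal C(\varphi)$ is the set of subformulas of $\varphi$. For $q,q'$ of the same dimension, $q\equiv q'$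 iff they satisfy the same formulas of $\mathcal C(\varphi)$. For $q\in Q_0$, $[q]=\{q'\in Q_0:q\equiv q'\}$; for $q\in Q_n$, $n\ge1$, $[q]=\{q'\in Q_n:q\equiv q'$, $t_i(q')\in[t_i(q)]$, $s_i(q')\in[s_i(q)]$ for all $1\le i\le n\}$; $Q_n^f=\{[q]:q\in Q_n\}$. *)

theory Defs
  imports Complex_Main
begin

text \<open>Cubical set: Q n is the set of n-cells; s i, t i are the i-th face maps
  (used on Q n for 1 \<le> i \<le> n, landing in Q (n-1)).\<close>
definition cubical_set :: "(nat \<Rightarrow> 'q set) \<Rightarrow> (nat \<Rightarrow> 'q \<Rightarrow> 'q) \<Rightarrow> (nat \<Rightarrow> 'q \<Rightarrow> 'q) \<Rightarrow> bool" where
  "cubical_set Q s t \<longleftrightarrow>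
     (\<forall>m n. m \<noteq> n \<longrightarrow> Q m \<inter> Q n = {}) \<and>
     (\<forall>n i q. 1 \<le> i \<and> i \<le> n \<and> q \<in> Q n \<longrightarrow> s i q \<in> Q (n - 1) \<and> t i q \<in> Q (n - 1)) \<and>
     (\<forall>n i j q. 1 \<le> i \<and> i < j \<and> j \<le> n \<and> q \<in> Q n \<longrightarrow>
        (\<forall>\<alpha> \<in> {s, t}. \<forall>\<beta> \<in> {s, t}. \<alpha> i (\<beta> j q) = \<beta> (j - 1) (\<alpha> i q)))"

definition hdml_model :: "(nat \<Rightarrow> 'q set) \<Rightarrow> (nat \<Rightarrow> 'q \<Rightarrow> 'q) \<Rightarrow> (nat \<Rightarrow> 'q \<Rightarrow> 'q)
    \<Rightarrow> ('q \<Rightarrow> 'sigma) \<Rightarrow> ('q \<Rightarrow> 'ap set) \<Rightarrow> bool" where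
  "hdml_model Q s t l V \<longleftrightarrow> cubical_set Q s t \<and>
     (\<forall>q \<in> Q 2. \<forall>i \<in> {1, 2}. l (s i q) = l (t i q))"

datatype 'ap hform = Atom 'ap | Bot | Imp "'ap hform" "'ap hform" | DiaS "'ap hform" | DiaT "'ap hform"

fun fsize :: "'ap hform \<Rightarrow> nat" where
  "fsize (Atom p) = 1"
| "fsize Bot = 1"
| "fsize (Imp a b) = 1 + fsize a + fsize b"
| "fsize (DiaS a) = 1 + fsize a"
| "fsize (DiaT a) = 1 + fsize a"

fun subf :: "'ap hform \<Rightarrow> 'ap hform set" where
  "subf (Atom p) = {Atom p}"
| "subf Bot = {Bot}"
| "subf (Imp a b) = insert (Imp a b) (subf a \<union> subf b)"
| "subf (DiaS a) = insert (DiaS a) (subf a)"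
| "subf (DiaT a) = insert (DiaT a) (subf a)"

text \<open>Satisfaction at a cell q of dimension n (meaningful for q \<in> Q n).\<close>
fun sat :: "(nat \<Rightarrow> 'q set) \<Rightarrow> (nat \<Rightarrow> 'q \<Rightarrow> 'q) \<Rightarrow> (nat \<Rightarrow> 'q \<Rightarrow> 'q) \<Rightarrow> ('q \<Rightarrow> 'ap set)
    \<Rightarrow> nat \<Rightarrow> 'q \<Rightarrow> 'ap hform \<Rightarrow> bool" where
  "sat Q s t V n q (Atom p) = (p \<in> V q)"
| "sat Q s t V n q Bot = False"
| "sat Q s t V n q (Imp a b) = (sat Q s t V n q a \<longrightarrow> sat Q s t V n q b)"
| "sat Q s t V n q (DiaS a) =
     (\<exists>q' \<in> Q (Suc n). \<exists>i \<in> {1..Suc n}. s i q' = q \<and> sat Q s t V (Suc n) q' a)"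
| "sat Q s t V n q (DiaT a) = (\<exists>i \<in> {1..n}. sat Q s t V (n - 1) (t i q) a)"

definition hequiv :: "(nat \<Rightarrow> 'q set) \<Rightarrow> (nat \<Rightarrow> 'q \<Rightarrow> 'q) \<Rightarrow> (nat \<Rightarrow> 'q \<Rightarrow> 'q) \<Rightarrow> ('q \<Rightarrow> 'ap set)
    \<Rightarrow> 'ap hform \<Rightarrow> nat \<Rightarrow> 'q \<Rightarrow> 'q \<Rightarrow> bool" where
  "hequiv Q s t V \<phi> n q q' \<longleftrightarrow> (\<forall>\<psi> \<in> subf \<phi>. sat Q s t V n q \<psi> \<longleftrightarrow> sat Q s t V n q' \<psi>)"

fun fclass :: "(nat \<Rightarrow> 'q set) \<Rightarrow> (nat \<Rightarrow> 'q \<Rightarrow> 'q) \<Rightarrow> (nat \<Rightarrow> 'q \<Rightarrow> 'q) \<Rightarrow> ('q \<Rightarrow> 'ap set)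
    \<Rightarrow> 'ap hform \<Rightarrow> nat \<Rightarrow> 'q \<Rightarrow> 'q set" where
  "fclass Q s t V \<phi> 0 q = {q' \<in> Q 0. hequiv Q s t V \<phi> 0 q q'}"
| "fclass Q s t V \<phi> (Suc n) q = {q' \<in> Q (Suc n). hequiv Q s t V \<phi> (Suc n) q q' \<and>
     (\<forall>i \<in> {1..Suc n}. t i q' \<in> fclass Q s t V \<phi> n (t i q) \<and> s i q' \<in> fclass Q s t V \<phi> n (s i q))}"

definition Qf :: "(nat \<Rightarrow> 'q set) \<Rightarrow> (nat \<Rightarrow> 'q \<Rightarrow> 'q) \<Rightarrow> (nat \<Rightarrow> 'q \<Rightarrow> 'q) \<Rightarrow> ('q \<Rightarrow> 'ap set)
    \<Rightarrow> 'ap hform \<Rightarrow> nat \<Rightarrow> 'q set set" where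
  "Qf Q s t V \<phi> n = fclass Q s t V \<phi> n ` Q n"

end

theory Submission
  imports Defs "HOL-Library.FuncSet"
begin

(* A cell q of dimension n has a "type": the set of subformulas of phi it satisfies,
   a subset of C(phi), which has at most |phi| elements.  The class [q] is determined
   by data of bounded size:
   - for n = 0, by the type of q alone, so |Q_0^f| <= 2^|phi|;
   - for n + 1, by the type of q together with the classes of its 2(n+1) faces
     s_i q, t_i q, which lie in Q_n^f, so |Q_(n+1)^f| <= 2^|phi| * |Q_n^f|^(2(n+1)).
   Both are instances of one counting principle: if f is determined on A by a key
   with values in a finite set K, then |f ` A| <= |K|.  Hence |Q_n^f| <= 2^(|phi| N_n)
   for the exponents N_0 = 1, N_(n+1) = 1 + 2(n+1) N_n, and a short computation
   shows N_n = n! * sum_(k=0..n) 2^k/(n-k)!, the form used in the statement. *)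

lemma finite_subf: "finite (subf \<phi>)"
  by (induction \<phi>) auto

lemma card_subf_le: "card (subf \<phi>) \<le> fsize \<phi>"
proof (induction \<phi>)
  case (Imp a b)
  have "card (subf (Imp a b)) \<le> Suc (card (subf a \<union> subf b))"
    by (simp add: card_insert_le_m1 card_insert_if)
  also have "card (subf a \<union> subf b) \<le> card (subf a) + card (subf b)"
    by (rule card_Un_le)
  finally show ?case using Imp by simp
qed (auto simp: card_insert_if finite_subf)

lemma card_image_determined_by_key:
  assumes determined: "\<And>a b. a \<in> A \<Longrightarrow> b \<in> A \<Longrightarrow> key a = key b \<Longrightarrow> f a = f b"
    and into: "key ` A \<subseteq> K" and "finite K"
  shows "finite (f ` A) \<and> card (f ` A) \<le> card K"
proof -
  have factor: "f ` A = (\<lambda>k. f (inv_into A key k)) ` (key ` A)"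
  proof -
    have "f (inv_into A key (key a)) = f a" if "a \<in> A" for a
      using determined that by (metis f_inv_into_f image_eqI inv_into_into)
    then show ?thesis by (auto simp: image_iff)
  qed
  have "finite (key ` A)" using into \<open>finite K\<close> finite_subset by blast
  moreover have "card (key ` A) \<le> card K" by (rule card_mono[OF \<open>finite K\<close> into])
  ultimately show ?thesis unfolding factor by (meson card_image_le finite_imageI order_trans)
qed

text \<open>The exponents N_n, defined by the recursion that the counting argument produces.\<close>
fun bound_exponent :: "nat \<Rightarrow> nat" where
  "bound_exponent 0 = 1"
| "bound_exponent (Suc n) = 1 + 2 * Suc n * bound_exponent n"

lemma bound_exponent_closed_form:
  "real (bound_exponent n) = fact n * (\<Sum>k = 0..n. 2 ^ k / fact (n - k))"
proof (induction n)
  case (Suc n)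
  define S where "S m = (\<Sum>k = 0..m. (2::real) ^ k / fact (m - k))" for m
  have "S (Suc n) = 1 / fact (Suc n) + (\<Sum>k = 0..n. 2 ^ Suc k / fact (Suc n - Suc k))"
    unfolding S_def by (subst sum.atLeast0_atMost_Suc_shift) simp
  also have "\<dots> = 1 / fact (Suc n) + 2 * S n"
    unfolding S_def by (simp add: sum_distrib_left)
  finally have "fact (Suc n) * S (Suc n) = 1 + 2 * real (Suc n) * (fact n * S n)"
    unfolding fact_Suc of_nat_mult by (simp add: distrib_left)
  then show ?case using Suc.IH unfolding S_def by (simp add: algebra_simps)
qed simp

lemma cubical_set_faces:
  assumes "cubical_set Q s t" "q \<in> Q (Suc n)" "i \<in> {1..Suc n}"
  shows "s i q \<in> Q n \<and> t i q \<in> Q n"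
proof -
  have "\<forall>n i q. 1 \<le> i \<and> i \<le> n \<and> q \<in> Q n \<longrightarrow> s i q \<in> Q (n - 1) \<and> t i q \<in> Q (n - 1)"
    using assms(1) unfolding cubical_set_def by blast
  from this[rule_format, of i "Suc n" q] show ?thesis using assms(2,3) by simp
qed

context
  fixes Q :: "nat \<Rightarrow> 'q set" and s t :: "nat \<Rightarrow> 'q \<Rightarrow> 'q"
    and V :: "'q \<Rightarrow> 'ap set" and \<phi> :: "'ap hform"
begin

definition ftype :: "nat \<Rightarrow> 'q \<Rightarrow> 'ap hform set" where
  "ftype n q = {\<psi> \<in> subf \<phi>. sat Q s t V n q \<psi>}"

lemma ftype_in_Pow: "ftype n q \<in> Pow (subf \<phi>)"
  unfolding ftype_def by auto

lemma hequiv_determined_by_ftype: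
  assumes "ftype n q1 = ftype n q2"
  shows "hequiv Q s t V \<phi> n q1 = hequiv Q s t V \<phi> n q2"
proof -
  have "\<forall>\<psi>\<in>subf \<phi>. sat Q s t V n q1 \<psi> = sat Q s t V n q2 \<psi>"
    using assms unfolding ftype_def set_eq_iff by blast
  then show ?thesis unfolding hequiv_def by (auto intro!: ext)
qed

lemma fclass_Suc_determined:
  assumes "ftype (Suc n) q1 = ftype (Suc n) q2"
    and "\<forall>i\<in>{1..Suc n}. fclass Q s t V \<phi> n (t i q1) = fclass Q s t V \<phi> n (t i q2)
           \<and> fclass Q s t V \<phi> n (s i q1) = fclass Q s t V \<phi> n (s i q2)"
  shows "fclass Q s t V \<phi> (Suc n) q1 = fclass Q s t V \<phi> (Suc n) q2"
  using hequiv_determined_by_ftype[OF assms(1)] assms(2) by simp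

lemma Qf_0_bound:
  "finite (Qf Q s t V \<phi> 0) \<and> card (Qf Q s t V \<phi> 0) \<le> 2 ^ card (subf \<phi>)"
proof -
  have "finite (Qf Q s t V \<phi> 0) \<and> card (Qf Q s t V \<phi> 0) \<le> card (Pow (subf \<phi>))"
    unfolding Qf_def
  proof (rule card_image_determined_by_key[where key = "ftype 0"])
    show "fclass Q s t V \<phi> 0 a = fclass Q s t V \<phi> 0 b" if "ftype 0 a = ftype 0 b" for a b
      using hequiv_determined_by_ftype[OF that] by simp
  qed (use ftype_in_Pow finite_subf in auto)
  then show ?thesis by (simp add: card_Pow finite_subf)
qed

lemma Qf_Suc_bound:
  assumes "cubical_set Q s t" and finite_prev: "finite (Qf Q s t V \<phi> n)"
  shows "finite (Qf Q s t V \<phi> (Suc n)) \<and>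
    card (Qf Q s t V \<phi> (Suc n)) \<le> 2 ^ card (subf \<phi>) * card (Qf Q s t V \<phi> n) ^ (2 * Suc n)"
proof -
  let ?cls = "fclass Q s t V \<phi> n" and ?A = "Qf Q s t V \<phi> n" and ?I = "{1..Suc n}"
  define key where
    "key q = (ftype (Suc n) q, restrict (\<lambda>i. (?cls (t i q), ?cls (s i q))) ?I)" for q
  define K where "K = Pow (subf \<phi>) \<times> PiE ?I (\<lambda>_. ?A \<times> ?A)"
  have "finite (Qf Q s t V \<phi> (Suc n)) \<and> card (Qf Q s t V \<phi> (Suc n)) \<le> card K"
    unfolding Qf_def
  proof (rule card_image_determined_by_key[where key = key])
    show "fclass Q s t V \<phi> (Suc n) a = fclass Q s t V \<phi> (Suc n) b" if "key a = key b" for a b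
    proof (rule fclass_Suc_determined)
      show "ftype (Suc n) a = ftype (Suc n) b" using that unfolding key_def by simp
      have "restrict (\<lambda>i. (?cls (t i a), ?cls (s i a))) ?I = restrict (\<lambda>i. (?cls (t i b), ?cls (s i b))) ?I"
        using that unfolding key_def by simp
      then show "\<forall>i\<in>?I. ?cls (t i a) = ?cls (t i b) \<and> ?cls (s i a) = ?cls (s i b)"
        by (metis (mono_tags, lifting) prod.inject restrict_apply')
    qed
    show "key ` Q (Suc n) \<subseteq> K"
    proof
      fix k assume "k \<in> key ` Q (Suc n)"
      then obtain q where q: "q \<in> Q (Suc n)" and k: "k = key q" by blast
      have "?cls (t i q) \<in> ?A \<and> ?cls (s i q) \<in> ?A" if "i \<in> ?I" for i
        using cubical_set_faces[OF assms(1) q that] unfolding Qf_def by blast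
      then show "k \<in> K" unfolding k key_def K_def using ftype_in_Pow by auto
    qed
    show "finite K" unfolding K_def using finite_prev by (simp add: finite_subf finite_PiE)
  qed
  moreover have "card K = 2 ^ card (subf \<phi>) * card ?A ^ (2 * Suc n)"
    unfolding K_def using finite_prev
    by (simp add: card_cartesian_product card_PiE card_Pow finite_subf power_mult power2_eq_square)
  ultimately show ?thesis by simp
qed

lemma Qf_bound:
  assumes "cubical_set Q s t"
  shows "finite (Qf Q s t V \<phi> n) \<and> card (Qf Q s t V \<phi> n) \<le> 2 ^ (fsize \<phi> * bound_exponent n)"
proof (induction n)
  case 0
  have "(2::nat) ^ card (subf \<phi>) \<le> 2 ^ fsize \<phi>"
    using card_subf_le by (rule power_increasing) simp
  then show ?case using Qf_0_bound by (metis le_trans mult_1_right bound_exponent.simps(1))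
next
  case (Suc n)
  let ?m = "fsize \<phi>"
  have "card (Qf Q s t V \<phi> (Suc n)) \<le> 2 ^ card (subf \<phi>) * card (Qf Q s t V \<phi> n) ^ (2 * Suc n)"
    using Qf_Suc_bound[OF assms] Suc.IH by blast
  also have "\<dots> \<le> 2 ^ ?m * (2 ^ (?m * bound_exponent n)) ^ (2 * Suc n)"
    using Suc.IH card_subf_le[of \<phi>] by (intro mult_mono power_mono power_increasing) auto
  also have "\<dots> = 2 ^ (?m + ?m * bound_exponent n * (2 * Suc n))"
    by (simp only: power_add power_mult)
  also have "\<dots> = 2 ^ (?m * bound_exponent (Suc n))"
    by (rule arg_cong[where f = "(^) 2"]) (simp add: algebra_simps)
  finally show ?case using Qf_Suc_bound[OF assms] Suc.IH by blast
qed

end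

theorem mainTheorem4:
  fixes Q :: "nat \<Rightarrow> 'q set" and s t :: "nat \<Rightarrow> 'q \<Rightarrow> 'q"
    and l :: "'q \<Rightarrow> 'sigma" and V :: "'q \<Rightarrow> 'ap set" and \<phi> :: "'ap hform"
  assumes "hdml_model Q s t l V"
  shows "\<forall>n. finite (Qf Q s t V \<phi> n) \<and>
    real (card (Qf Q s t V \<phi> n))
      \<le> 2 powr (real (fsize \<phi>) * (fact n * (\<Sum>k = 0..n. 2 ^ k / fact (n - k))))"
proof
  fix n
  have cubical: "cubical_set Q s t" using assms unfolding hdml_model_def by simp
  note bound = Qf_bound[OF cubical, of V \<phi> n]
  have "real (card (Qf Q s t V \<phi> n)) \<le> real (2 ^ (fsize \<phi> * bound_exponent n))"
    using bound by linarith
  also have "\<dots> = 2 powr (real (fsize \<phi>) * real (bound_exponent n))"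
    by (simp add: powr_realpow[symmetric])
  finally show "finite (Qf Q s t V \<phi> n) \<and>
      real (card (Qf Q s t V \<phi> n)) \<le> 2 powr (real (fsize \<phi>) * (fact n * (\<Sum>k = 0..n. 2 ^ k / fact (n - k))))"
    using bound bound_exponent_closed_form[of n] by simp
qed

end
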